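(* Let $m\ge1$ and let $j\colon K_m\to\mathbb Z^{2m-1}$ be $j(f,0)=(f(-m+1),\dots,f(m-1))$. Then for all $x,y\in K_m$, $$d(x,y)-4(m-1)\ \le\ d_1(j(x),j(y))\ \le\ d(x,y),$$ where $d$ is the word metric of $\mathbb Z\wr\mathbb Z$ and $d_1$ is the $\ell^1$ metric on $\mathbb Z^{2m-1}$.
   Context: The lamplighter group $\mathbb Z\wr\mathbb Z$ consists of pairs $(f,n)$ with $f\colon\mathbb Z\to\mathbb Z$ finitely supported and $n\in\mathbb Z$, with product $(f,n)(g,n')=(f+g(\cdot-n),\,n+n')$; it is equipped with the left-invariant word metric $d$ for the generators $a=(\delta_0,0)$ and $t=(0,1)$. $K=\{(f,0)\}$ and $K_m=\{(f,0):\operatorname{supp}f\subseteq\{-m+1,\dots,m-1\}\}$, with the metric restricted from $d$. *)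

theory Defs
  imports Main
begin

text \<open>Lamplighter group Z wr Z: pairs (f, n) with f : int => int finitely supported.\<close>

type_synonym lamp = "(int \<Rightarrow> int) \<times> int"

definition lamp_mult :: "lamp \<Rightarrow> lamp \<Rightarrow> lamp" where
  "lamp_mult x y = (\<lambda>k. fst x k + fst y (k - snd x), snd x + snd y)"

definition lamp_one :: lamp where
  "lamp_one = (\<lambda>_. 0, 0)"

definition lamp_inv :: "lamp \<Rightarrow> lamp" where
  "lamp_inv x = (\<lambda>k. - fst x (k + snd x), - snd x)"

datatype gen = GA | GAinv | GT | GTinv

definition delta0 :: "int \<Rightarrow> int" where
  "delta0 k = (if k = 0 then 1 else 0)"

fun gen_elem :: "gen \<Rightarrow> lamp" where
  "gen_elem GA = (delta0, 0)"
| "gen_elem GAinv = (\<lambda>k. - delta0 k, 0)"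
| "gen_elem GT = (\<lambda>_. 0, 1)"
| "gen_elem GTinv = (\<lambda>_. 0, -1)"

fun word_eval :: "gen list \<Rightarrow> lamp" where
  "word_eval [] = lamp_one"
| "word_eval (s # w) = lamp_mult (gen_elem s) (word_eval w)"

definition word_dist :: "lamp \<Rightarrow> lamp \<Rightarrow> nat" where
  "word_dist x y = (LEAST n. \<exists>w. length w = n \<and> word_eval w = lamp_mult (lamp_inv x) y)"

definition K_m :: "nat \<Rightarrow> lamp set" where
  "K_m m = {x. snd x = 0 \<and> (\<forall>k. fst x k \<noteq> 0 \<longrightarrow> - int m + 1 \<le> k \<and> k \<le> int m - 1)}"

definition jmap :: "nat \<Rightarrow> lamp \<Rightarrow> int list" where
  "jmap m x = map (fst x) [- int m + 1 .. int m - 1]"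

definition l1_dist :: "int list \<Rightarrow> int list \<Rightarrow> int" where
  "l1_dist u v = sum_list (map (\<lambda>(a, b). \<bar>a - b\<bar>) (zip u v))"

end

theory Submission
  imports Defs
begin

text \<open>
  Lower bound: the letters \<open>a\<^sup>\<plusminus>\<^sup>1\<close> change a single lamp by one and the letters \<open>t\<^sup>\<plusminus>\<^sup>1\<close> only shift
  the configuration, so the \<open>\<ell>\<^sup>1\<close>-norm of the lamp configuration of any word, restricted to any
  finite window, is at most the length of the word.
  Upper bound: with \<open>c = m - 1\<close> and \<open>g\<close> supported in \<open>[-c, c]\<close>, the word that walks from
  \<open>0\<close> to \<open>-c\<close>, sweeps right to \<open>c\<close> setting lamp \<open>k\<close> with \<open>\<bar>g k\<bar>\<close> letters \<open>a\<^sup>\<plusminus>\<^sup>1\<close>, and walks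
  back to \<open>0\<close> represents \<open>(g, 0)\<close> and has length \<open>\<Sum>\<bar>g k\<bar> + 4c\<close>.
\<close>

lemma lamp_mult_assoc: "lamp_mult (lamp_mult x y) z = lamp_mult x (lamp_mult y z)"
  by (auto simp: lamp_mult_def algebra_simps)

lemma lamp_mult_one_left [simp]: "lamp_mult lamp_one x = x"
  by (simp add: lamp_mult_def lamp_one_def)

lemma word_eval_append: "word_eval (u @ v) = lamp_mult (word_eval u) (word_eval v)"
  by (induction u) (auto simp: lamp_mult_assoc)

lemma word_eval_replicate_GA: "word_eval (replicate n GA) = (\<lambda>k. int n * delta0 k, 0)"
  by (induction n) (auto simp: lamp_mult_def lamp_one_def algebra_simps)

lemma word_eval_replicate_GAinv: "word_eval (replicate n GAinv) = (\<lambda>k. - int n * delta0 k, 0)"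
  by (induction n) (auto simp: lamp_mult_def lamp_one_def algebra_simps)

lemma word_eval_replicate_GTinv: "word_eval (replicate n GTinv) = (\<lambda>_. 0, - int n)"
  by (induction n) (auto simp: lamp_mult_def lamp_one_def algebra_simps)

definition a_power :: "int \<Rightarrow> gen list" where
  "a_power c = (if c \<ge> 0 then replicate (nat c) GA else replicate (nat (- c)) GAinv)"

lemma word_eval_a_power: "word_eval (a_power c) = (\<lambda>k. c * delta0 k, 0)"
  by (auto simp: a_power_def word_eval_replicate_GA word_eval_replicate_GAinv)

lemma length_a_power: "length (a_power c) = nat \<bar>c\<bar>"
  by (auto simp: a_power_def)

lemma sum_abs_gen_elem_le_one:
  assumes "finite S"
  shows "(\<Sum>k\<in>S. \<bar>fst (gen_elem s) k\<bar>) \<le> 1"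
proof -
  have "(\<Sum>k\<in>S. \<bar>fst (gen_elem s) k\<bar>) \<le> (\<Sum>k\<in>S. delta0 k)"
    by (intro sum_mono) (cases s; simp add: delta0_def)
  also have "\<dots> = (if 0 \<in> S then 1 else 0)"
    using assms by (simp add: delta0_def)
  finally show ?thesis
    by (simp split: if_splits)
qed

lemma sum_abs_word_eval_le_length:
  "finite S \<Longrightarrow> (\<Sum>k\<in>S. \<bar>fst (word_eval w) k\<bar>) \<le> int (length w)"
proof (induction w arbitrary: S)
  case Nil
  then show ?case
    by (simp add: lamp_one_def)
next
  case (Cons s w)
  define h where "h = fst (word_eval w)"
  define shift where "shift = (\<lambda>k. k - snd (gen_elem s))"
  have "(\<Sum>k\<in>S. \<bar>fst (word_eval (s # w)) k\<bar>) = (\<Sum>k\<in>S. \<bar>fst (gen_elem s) k + h (shift k)\<bar>)"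
    by (simp add: lamp_mult_def h_def shift_def)
  also have "\<dots> \<le> (\<Sum>k\<in>S. \<bar>fst (gen_elem s) k\<bar>) + (\<Sum>k\<in>S. \<bar>h (shift k)\<bar>)"
    by (simp add: sum.distrib [symmetric] sum_mono abs_triangle_ineq)
  also have "(\<Sum>k\<in>S. \<bar>h (shift k)\<bar>) = (\<Sum>k\<in>shift ` S. \<bar>h k\<bar>)"
    by (simp add: sum.reindex inj_on_def shift_def)
  also have "\<dots> \<le> int (length w)"
    using Cons by (simp add: h_def)
  finally show ?case
    using sum_abs_gen_elem_le_one [OF Cons.prems, of s] by simp
qed

lemma ex_word_eval_support_0_n:
  assumes "\<And>k. g k \<noteq> 0 \<Longrightarrow> 0 \<le> k \<and> k \<le> int n"
  shows "\<exists>w. word_eval w = (g, int n) \<and> int (length w) \<le> (\<Sum>k\<in>{0..int n}. \<bar>g k\<bar>) + int n"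
  using assms
proof (induction n arbitrary: g)
  case 0
  then have "g = (\<lambda>k. g 0 * delta0 k)"
    by (fastforce simp: delta0_def fun_eq_iff)
  then have "word_eval (a_power (g 0)) = (g, 0)"
    by (simp add: word_eval_a_power)
  then show ?case
    by (intro exI [of _ "a_power (g 0)"]) (simp add: length_a_power)
next
  case (Suc n)
  define c where "c = g (int n + 1)"
  define g' where "g' = g(int n + 1 := 0)"
  have "0 \<le> k \<and> k \<le> int n" if "g' k \<noteq> 0" for k
    using Suc.prems [of k] that by (auto simp: g'_def split: if_splits)
  with Suc.IH obtain w where w: "word_eval w = (g', int n)"
    and len_w: "int (length w) \<le> (\<Sum>k\<in>{0..int n}. \<bar>g' k\<bar>) + int n"
    by blast
  have "word_eval (w @ [GT] @ a_power c) = (g, int (Suc n))"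
    by (auto simp: word_eval_append w word_eval_a_power lamp_mult_def lamp_one_def
        g'_def c_def delta0_def fun_eq_iff)
  moreover have "(\<Sum>k\<in>{0..int n}. \<bar>g' k\<bar>) = (\<Sum>k\<in>{0..int n}. \<bar>g k\<bar>)"
    by (intro sum.cong) (auto simp: g'_def)
  moreover have "{0..int (Suc n)} = insert (int n + 1) {0..int n}"
    by auto
  then have "(\<Sum>k\<in>{0..int (Suc n)}. \<bar>g k\<bar>) = \<bar>c\<bar> + (\<Sum>k\<in>{0..int n}. \<bar>g k\<bar>)"
    by (simp add: c_def)
  ultimately show ?case
    using len_w by (intro exI [of _ "w @ [GT] @ a_power c"]) (simp add: length_a_power)
qed

lemma ex_word_eval_support_centered:
  assumes "\<And>k. g k \<noteq> 0 \<Longrightarrow> - int c \<le> k \<and> k \<le> int c"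
  shows "\<exists>w. word_eval w = (g, 0) \<and> int (length w) \<le> (\<Sum>k\<in>{- int c..int c}. \<bar>g k\<bar>) + 4 * int c"
proof -
  define h where "h = (\<lambda>k. g (k - int c))"
  have "\<And>k. h k \<noteq> 0 \<Longrightarrow> 0 \<le> k \<and> k \<le> int (2 * c)"
    using assms by (force simp: h_def)
  then obtain w where w: "word_eval w = (h, int (2 * c))"
    and len_w: "int (length w) \<le> (\<Sum>k\<in>{0..int (2 * c)}. \<bar>h k\<bar>) + int (2 * c)"
    using ex_word_eval_support_0_n by blast
  have shift: "{0..int (2 * c)} = (\<lambda>k. k + int c) ` {- int c..int c}"
    by (auto simp: image_iff intro: bexI [where x = "_ - int c"])
  then have "(\<Sum>k\<in>{0..int (2 * c)}. \<bar>h k\<bar>) = (\<Sum>k\<in>{- int c..int c}. \<bar>g k\<bar>)"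
    unfolding shift by (subst sum.reindex) (auto simp: inj_on_def h_def)
  moreover have "word_eval (replicate c GTinv @ w @ replicate c GTinv) = (g, 0)"
    by (simp add: word_eval_append word_eval_replicate_GTinv w lamp_mult_def h_def)
  ultimately show ?thesis
    using len_w by (intro exI [of _ "replicate c GTinv @ w @ replicate c GTinv"]) simp
qed

lemma word_dist_le_length:
  "word_eval w = lamp_mult (lamp_inv x) y \<Longrightarrow> word_dist x y \<le> length w"
  unfolding word_dist_def by (rule Least_le) blast

lemma word_dist_attained:
  assumes "word_eval w = lamp_mult (lamp_inv x) y"
  obtains w' where "length w' = word_dist x y" "word_eval w' = lamp_mult (lamp_inv x) y"
  using LeastI_ex [of "\<lambda>n. \<exists>w. length w = n \<and> word_eval w = lamp_mult (lamp_inv x) y"] assms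
  unfolding word_dist_def by blast

lemma l1_dist_jmap:
  "l1_dist (jmap m x) (jmap m y) = (\<Sum>k\<in>{- int m + 1..int m - 1}. \<bar>fst x k - fst y k\<bar>)"
  by (simp add: l1_dist_def jmap_def zip_map_map zip_same_conv_map o_def
      sum_list_distinct_conv_sum_set)

lemma lamp_inv_mult_K_m:
  assumes "x \<in> K_m m" and "y \<in> K_m m"
  shows "lamp_mult (lamp_inv x) y = (\<lambda>k. fst y k - fst x k, 0)"
  using assms by (simp add: K_m_def lamp_mult_def lamp_inv_def)

theorem lemma4p2p4:
  fixes m :: nat and x y :: lamp
  assumes "m \<ge> 1" and "x \<in> K_m m" and "y \<in> K_m m"
  shows "int (word_dist x y) - 4 * (int m - 1) \<le> l1_dist (jmap m x) (jmap m y)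
       \<and> l1_dist (jmap m x) (jmap m y) \<le> int (word_dist x y)"
proof -
  define c where "c = m - 1"
  define g where "g = (\<lambda>k. fst y k - fst x k)"
  have c: "int c = int m - 1"
    using assms(1) by (simp add: c_def)
  have z: "lamp_mult (lamp_inv x) y = (g, 0)"
    using lamp_inv_mult_K_m [OF assms(2,3)] by (simp add: g_def)
  have l1: "l1_dist (jmap m x) (jmap m y) = (\<Sum>k\<in>{- int c..int c}. \<bar>g k\<bar>)"
    by (simp add: l1_dist_jmap c g_def abs_minus_commute)
  have "\<And>k. g k \<noteq> 0 \<Longrightarrow> - int c \<le> k \<and> k \<le> int c"
    using assms(2,3) c by (force simp: K_m_def g_def)
  then obtain w where w: "word_eval w = (g, 0)"
    and len_w: "int (length w) \<le> (\<Sum>k\<in>{- int c..int c}. \<bar>g k\<bar>) + 4 * int c"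
    using ex_word_eval_support_centered by blast
  have upper: "int (word_dist x y) \<le> int (length w)"
    using word_dist_le_length w z by simp
  obtain w' where "length w' = word_dist x y" "word_eval w' = (g, 0)"
    using word_dist_attained [of w] w z by metis
  then have lower: "(\<Sum>k\<in>{- int c..int c}. \<bar>g k\<bar>) \<le> int (word_dist x y)"
    using sum_abs_word_eval_le_length [of _ w'] by fastforce
  show ?thesis
    using upper len_w lower l1 c by auto
qed

end
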